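(* Let $d\in\mathbb N\cup\{\infty\}$ and let ${\boldsymbol\gamma}$ be product weights, $\gamma_u=\prod_{j\in u}\gamma_j$. Then $(\Delta_v{\boldsymbol\gamma})_u=\gamma_u\prod_{j\in v}(1-\gamma_j)$ for all $u,v\in\mathcal U_d$ with $u\cap v=\emptyset$, and ${\boldsymbol\gamma}\in\mathcal M_d$ if and only if $0\le\gamma_j\le1$ for all $j\in[d]$. If moreover $d=\infty$ and ${\boldsymbol\gamma}\in\mathcal M_d$, then: (a) ${\boldsymbol\gamma}\in\mathcal N_d$ iff $\lim_{j\to\infty}\gamma_j=0$; (b) for any $C>0$, $T^\downarrow_{d,C}{\boldsymbol\gamma}=\mathbf 0$ iff $\sum_{j=1}^\infty\gamma_j=\infty$; (c) ${\boldsymbol\gamma}\in\mathcal A_d$ iff $\sum_{j=1}^\infty\gamma_j<\infty$ iff ${\boldsymbol\gamma}\in\mathcal P_d$.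
   Context: Write $[d]=\{1,\dots,d\}$ if $d\in\mathbb N$ and $[d]=\mathbb N$ if $d=\infty$; $[s]=\{1,\dots,s\}$ for $s\in\mathbb N$. Let $\mathcal U_d$ be the set of all finite subsets of $[d]$. Weights are families ${\boldsymbol\gamma}=(\gamma_u)_{u\in\mathcal U_d}$ of non-negative reals ($\mathcal W_d$); inequalities and limits of families are componentwise, $\mathbf 0$ is the zero family. Product weights: $\gamma_u=\prod_{j\in u}\gamma_j$ for a non-increasing sequence $(\gamma_j)_{j\in[d]}$ of non-negative reals, with $\gamma_\emptyset=1$. Difference operator: $(\Delta_v{\boldsymbol\gamma})_u=\sum_{w\subseteq v}(-1)^{|w|}\gamma_{u\cup w}$. $\mathcal M_d$: weights with $\Delta_v{\boldsymbol\gamma}\ge\mathbf 0$ for all $v\in\mathcal U_d$. For $d=\infty$ and $C>0$: $(T^\downarrow_{d,C}{\boldsymbol\gamma})_u=C^{-2|u|}\lim_{s\to\infty}(\Delta_{[s]\setminus u}{\boldsymbol\gamma})_u$ for ${\boldsymbol\gamma}\in\mathcal M_d$; with $\max\emptyset=0$, $\mathcal N_d=\{{\boldsymbol\gamma}\in\mathcal M_d:\gamma_u\to0\text{ as }\max u\to\infty\}$; $\mathcal P_d=\{{\boldsymbol\gamma}\in\mathcal M_d:\sum_{v}\gamma_v<\infty\}$; $\mathcal A_d=\{{\boldsymbol\gamma}\in\mathcal M_d:\lim_{r\to\infty}\lim_{s\to\infty}\Delta_{[s]\setminus[r]}{\boldsymbol\gamma}={\boldsymbol\gamma}\}$. *)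

theory Defs
  imports "HOL-Analysis.Analysis" "HOL-Library.Extended_Nat"
begin

definition idx :: "enat \<Rightarrow> nat set" where
  "idx d = {j. 1 \<le> j \<and> enat j \<le> d}"

definition U :: "enat \<Rightarrow> nat set set" where
  "U d = {u. finite u \<and> u \<subseteq> idx d}"

text \<open>Weights are families indexed by U_d; we model them as functions on nat sets,
  only the values on U_d matter.\<close>
definition Wts :: "enat \<Rightarrow> (nat set \<Rightarrow> real) set" where
  "Wts d = {\<gamma>. \<forall>u\<in>U d. 0 \<le> \<gamma> u}"

definition prodw :: "(nat \<Rightarrow> real) \<Rightarrow> nat set \<Rightarrow> real" where
  "prodw g = (\<lambda>u. \<Prod>j\<in>u. g j)"

definition Delta :: "nat set \<Rightarrow> (nat set \<Rightarrow> real) \<Rightarrow> nat set \<Rightarrow> real" where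
  "Delta v \<gamma> u = (\<Sum>w\<in>Pow v. (-1) ^ card w * \<gamma> (u \<union> w))"

definition M :: "enat \<Rightarrow> (nat set \<Rightarrow> real) set" where
  "M d = {\<gamma>. \<gamma> \<in> Wts d \<and> (\<forall>v\<in>U d. \<forall>u\<in>U d. 0 \<le> Delta v \<gamma> u)}"

definition Tdown :: "real \<Rightarrow> (nat set \<Rightarrow> real) \<Rightarrow> nat set \<Rightarrow> real" where
  "Tdown C \<gamma> u = (1 / C ^ (2 * card u)) * lim (\<lambda>s. Delta ({1..s} - u) \<gamma> u)"

definition maxu :: "nat set \<Rightarrow> nat" where
  "maxu u = (if u = {} then 0 else Max u)"

definition N :: "enat \<Rightarrow> (nat set \<Rightarrow> real) set" where
  "N d = {\<gamma>. \<gamma> \<in> M d \<and>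
      (\<forall>e>0. \<exists>K. \<forall>u\<in>U d. K \<le> maxu u \<longrightarrow> \<bar>\<gamma> u\<bar> < e)}"

definition P :: "enat \<Rightarrow> (nat set \<Rightarrow> real) set" where
  "P d = {\<gamma>. \<gamma> \<in> M d \<and> \<gamma> summable_on U d}"

definition A :: "enat \<Rightarrow> (nat set \<Rightarrow> real) set" where
  "A d = {\<gamma>. \<gamma> \<in> M d \<and>
      (\<forall>u\<in>U d. (\<forall>r. convergent (\<lambda>s. Delta ({1..s} - {1..r}) \<gamma> u)) \<and>
         (\<lambda>r. lim (\<lambda>s. Delta ({1..s} - {1..r}) \<gamma> u)) \<longlonglongrightarrow> \<gamma> u)}"

end

theory Submission
  imports Defs
begin

text \<open>For product weights the difference operator factorises:
  (\<Delta>_v \<gamma>)_u = \<gamma>_u \<Prod>_{j \<in> v} (1 - \<gamma>_j) if u \<inter> v = {}, and it vanishes otherwise.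
  For d = \<infinity> all limits occurring in N_d, T_down and A_d therefore reduce to the partial
  products \<Prod>_{j \<in> [s] - w} (1 - \<gamma>_j). These decrease in s; by 1 - x \<le> exp (-x) their limit
  is 0 when \<Sum> \<gamma>_j = \<infinity>, and by Weierstrass' product inequality it is at least
  1 - \<Sum>_{j > r} \<gamma>_j for w = [r]. Summability over U_\<infinity> follows from
  \<Sum>_{u \<subseteq> [n]} \<gamma>_u = \<Prod>_{j \<le> n} (1 + \<gamma>_j), which lies between \<Sum>_{j \<le> n} \<gamma>_j
  and exp (\<Sum>_{j \<le> n} \<gamma>_j).\<close>

lemma Delta_insert:
  assumes "finite v" "j \<notin> v"
  shows "Delta (insert j v) \<gamma> u = Delta v \<gamma> u - Delta v \<gamma> (insert j u)"
proof -
  have inj: "inj_on (insert j) (Pow v)"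
    using assms(2) by (auto simp: inj_on_def)
  have card_ins: "card (insert j w) = Suc (card w)" if "w \<in> Pow v" for w
    using that assms by (subst card_insert_disjoint) (auto dest: finite_subset)
  have "Delta (insert j v) \<gamma> u
      = Delta v \<gamma> u + (\<Sum>w\<in>insert j ` Pow v. (-1) ^ card w * \<gamma> (u \<union> w))"
    unfolding Delta_def Pow_insert using assms
    by (subst sum.union_disjoint) auto
  also have "(\<Sum>w\<in>insert j ` Pow v. (-1) ^ card w * \<gamma> (u \<union> w)) = - Delta v \<gamma> (insert j u)"
    unfolding Delta_def sum.reindex[OF inj] sum_negf[symmetric]
    by (intro sum.cong) (auto simp: card_ins)
  finally show ?thesis
    by simp
qed

lemma Delta_eq_0_if_overlap:
  assumes "finite v" "u \<inter> v \<noteq> {}"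
  shows "Delta v \<gamma> u = 0"
proof -
  obtain j where j: "j \<in> u" "j \<in> v"
    using assms(2) by blast
  then have "Delta v \<gamma> u = Delta (v - {j}) \<gamma> u - Delta (v - {j}) \<gamma> (insert j u)"
    using Delta_insert[of "v - {j}" j] assms(1) by (simp add: insert_absorb)
  with j show ?thesis
    by (simp add: insert_absorb)
qed

lemma Delta_prodw:
  assumes "finite v" "finite u" "u \<inter> v = {}"
  shows "Delta v (prodw g) u = prodw g u * (\<Prod>j\<in>v. 1 - g j)"
  using assms
proof (induction v arbitrary: u rule: finite_induct)
  case empty
  then show ?case
    by (simp add: Delta_def)
next
  case (insert j v)
  then have "prodw g (insert j u) = g j * prodw g u"
    by (simp add: prodw_def)
  with insert show ?case
    by (simp add: Delta_insert algebra_simps)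
qed

lemma prodw_in_M_iff:
  assumes nonneg: "\<forall>j\<in>idx d. 0 \<le> g j"
  shows "prodw g \<in> M d \<longleftrightarrow> (\<forall>j\<in>idx d. 0 \<le> g j \<and> g j \<le> 1)"
proof
  assume M: "prodw g \<in> M d"
  show "\<forall>j\<in>idx d. 0 \<le> g j \<and> g j \<le> 1"
  proof
    fix j assume j: "j \<in> idx d"
    then have "0 \<le> Delta {j} (prodw g) {}"
      using M by (auto simp: M_def U_def)
    also have "Delta {j} (prodw g) {} = 1 - g j"
      using Delta_prodw[of "{j}" "{}" g] by (simp add: prodw_def)
    finally show "0 \<le> g j \<and> g j \<le> 1"
      using nonneg j by auto
  qed
next
  assume g01: "\<forall>j\<in>idx d. 0 \<le> g j \<and> g j \<le> 1"
  have prodw_nonneg: "0 \<le> prodw g u" if "u \<in> U d" for u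
    using that g01 by (auto simp: prodw_def U_def intro: prod_nonneg)
  have "0 \<le> Delta v (prodw g) u" if u: "u \<in> U d" and v: "v \<in> U d" for u v
  proof (cases "u \<inter> v = {}")
    case True
    have "0 \<le> (\<Prod>j\<in>v. 1 - g j)"
      using v g01 by (intro prod_nonneg) (auto simp: U_def)
    with prodw_nonneg[OF u] have "0 \<le> prodw g u * (\<Prod>j\<in>v. 1 - g j)"
      by simp
    with True u v show ?thesis
      by (simp add: Delta_prodw U_def)
  next
    case False
    with v show ?thesis
      by (simp add: Delta_eq_0_if_overlap U_def)
  qed
  then show "prodw g \<in> M d"
    using prodw_nonneg by (simp add: M_def Wts_def)
qed

lemma mem_U_infinity: "u \<in> U \<infinity> \<longleftrightarrow> finite u \<and> (\<forall>j\<in>u. 1 \<le> j)"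
  by (auto simp: U_def idx_def)

lemma Pow_atLeastAtMost_subset_U_infinity: "Pow {1..n} \<subseteq> U \<infinity>"
proof
  fix u assume "u \<in> Pow {1..n}"
  then show "u \<in> U \<infinity>"
    using finite_subset[of u "{1..n}"] by (auto simp: mem_U_infinity)
qed

definition compl_prod :: "(nat \<Rightarrow> real) \<Rightarrow> nat set \<Rightarrow> nat \<Rightarrow> real" where
  "compl_prod g w s = (\<Prod>j\<in>{1..s} - w. 1 - g j)"

lemma Delta_prodw_compl:
  assumes "finite u" "u \<inter> ({1..s} - w) = {}"
  shows "Delta ({1..s} - w) (prodw g) u = prodw g u * compl_prod g w s"
  using assms by (simp add: Delta_prodw compl_prod_def)

lemma Tdown_prodw:
  assumes "finite u" "compl_prod g u \<longlonglongrightarrow> L"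
  shows "Tdown C (prodw g) u = prodw g u * L / C ^ (2 * card u)"
proof -
  have "(\<lambda>s. Delta ({1..s} - u) (prodw g) u) = (\<lambda>s. prodw g u * compl_prod g u s)"
    using assms(1) by (intro ext Delta_prodw_compl) blast+
  also have "\<dots> \<longlonglongrightarrow> prodw g u * L"
    using assms(2) by (rule tendsto_mult_left)
  finally have "lim (\<lambda>s. Delta ({1..s} - u) (prodw g) u) = prodw g u * L"
    by (rule limI)
  then show ?thesis
    by (simp add: Tdown_def)
qed

lemma sum_prodw_Pow: "finite S \<Longrightarrow> (\<Sum>u\<in>Pow S. prodw g u) = (\<Prod>j\<in>S. 1 + g j)"
  using prod_add[of S g "\<lambda>_. 1"] by (simp add: prodw_def add.commute)

lemma prod_one_minus_le_exp:
  fixes a :: "'a \<Rightarrow> real"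
  assumes "\<And>x. x \<in> S \<Longrightarrow> a x \<le> 1"
  shows "(\<Prod>x\<in>S. 1 - a x) \<le> exp (- sum a S)"
proof (cases "finite S")
  case True
  have "(\<Prod>x\<in>S. 1 - a x) \<le> (\<Prod>x\<in>S. exp (- a x))"
  proof (rule prod_mono)
    fix x assume "x \<in> S"
    then show "0 \<le> 1 - a x \<and> 1 - a x \<le> exp (- a x)"
      using assms exp_ge_add_one_self[of "- a x"] by simp
  qed
  also have "\<dots> = exp (- sum a S)"
    using True by (simp add: exp_sum sum_negf[symmetric])
  finally show ?thesis .
qed simp

context
  fixes g :: "nat \<Rightarrow> real"
  assumes g01: "\<And>j. 1 \<le> j \<Longrightarrow> g j \<in> {0..1}"
begin

lemma prodw_nonneg: "\<forall>j\<in>u. 1 \<le> j \<Longrightarrow> 0 \<le> prodw g u"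
  unfolding prodw_def using g01 by (intro prod_nonneg) auto

lemma prodw_in_M_infinity: "prodw g \<in> M \<infinity>"
  using prodw_in_M_iff[of \<infinity> g] g01 by (simp add: idx_def)

lemma prodw_le_factor:
  assumes "finite u" "m \<in> u" "\<forall>j\<in>u. 1 \<le> j"
  shows "prodw g u \<le> g m"
proof -
  have "prodw g u = g m * (\<Prod>j\<in>u - {m}. g j)"
    unfolding prodw_def using assms(1,2) by (simp add: prod.remove)
  also have "\<dots> \<le> g m"
    using g01 assms(2,3) by (intro mult_left_le prod_le_1) auto
  finally show ?thesis .
qed

lemma prodw_in_N_iff: "prodw g \<in> N \<infinity> \<longleftrightarrow> g \<longlonglongrightarrow> 0"
proof
  assume "prodw g \<in> N \<infinity>"
  then have small: "\<forall>e>0. \<exists>K. \<forall>u\<in>U \<infinity>. K \<le> maxu u \<longrightarrow> \<bar>prodw g u\<bar> < e"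
    by (simp add: N_def)
  show "g \<longlonglongrightarrow> 0"
  proof (rule LIMSEQ_I)
    fix e :: real assume "0 < e"
    then obtain K where K: "\<forall>u\<in>U \<infinity>. K \<le> maxu u \<longrightarrow> \<bar>prodw g u\<bar> < e"
      using small by blast
    have "\<bar>g n\<bar> < e" if "max K 1 \<le> n" for n
      using K[rule_format, of "{n}"] that by (simp add: mem_U_infinity maxu_def prodw_def)
    then show "\<exists>no. \<forall>n\<ge>no. norm (g n - 0) < e"
      by (metis real_norm_def diff_zero)
  qed
next
  assume g0: "g \<longlonglongrightarrow> 0"
  have "\<exists>K. \<forall>u\<in>U \<infinity>. K \<le> maxu u \<longrightarrow> \<bar>prodw g u\<bar> < e" if "0 < e" for e
  proof -
    obtain K where K: "\<forall>n\<ge>K. \<bar>g n\<bar> < e"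
      using LIMSEQ_D[OF g0 \<open>0 < e\<close>] by auto
    have "\<bar>prodw g u\<bar> < e" if u: "u \<in> U \<infinity>" and big: "max K 1 \<le> maxu u" for u
    proof -
      have "u \<noteq> {}" "finite u" "\<forall>j\<in>u. 1 \<le> j"
        using u big by (auto simp: mem_U_infinity maxu_def)
      then have "0 \<le> prodw g u" "prodw g u \<le> g (Max u)"
        by (simp_all add: prodw_nonneg prodw_le_factor)
      moreover have "g (Max u) < e"
        using K big \<open>u \<noteq> {}\<close> by (auto simp: maxu_def)
      ultimately show ?thesis
        by simp
    qed
    then show ?thesis
      by blast
  qed
  then show "prodw g \<in> N \<infinity>"
    using prodw_in_M_infinity by (simp add: N_def)
qed

lemma summable_if_partial_sums_bounded:
  assumes "\<And>s. (\<Sum>j\<in>{1..s}. g j) \<le> B"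
  shows "summable (\<lambda>j. g (Suc j))"
proof (rule bounded_imp_summable)
  fix n
  have "(\<Sum>k\<le>n. g (Suc k)) = (\<Sum>j\<in>{1..Suc n}. g j)"
    by (simp only: lessThan_Suc_atMost[symmetric] sum_bounds_lt_plus1)
  with assms[of "Suc n"] show "(\<Sum>k\<le>n. g (Suc k)) \<le> B"
    by simp
qed (use g01 in simp)

lemma compl_prod_bounds: "compl_prod g w s \<in> {0..1}"
  unfolding compl_prod_def using g01 by (auto intro: prod_nonneg prod_le_1)

lemma decseq_compl_prod: "decseq (compl_prod g w)"
proof (rule decseq_SucI)
  fix s
  show "compl_prod g w (Suc s) \<le> compl_prod g w s"
  proof (cases "Suc s \<in> w")
    case True
    then have "{1..Suc s} - w = {1..s} - w"
      by (auto simp: le_Suc_eq)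
    then show ?thesis
      by (simp add: compl_prod_def)
  next
    case False
    then have "{1..Suc s} - w = insert (Suc s) ({1..s} - w)"
      by (auto simp: le_Suc_eq)
    then have "compl_prod g w (Suc s) = (1 - g (Suc s)) * compl_prod g w s"
      by (simp add: compl_prod_def)
    then show ?thesis
      using g01[of "Suc s"] compl_prod_bounds[of w s] by (simp add: mult_left_le_one_le)
  qed
qed

lemma compl_prod_LIMSEQ: "compl_prod g w \<longlonglongrightarrow> lim (compl_prod g w)"
proof -
  have "\<forall>s. 0 \<le> compl_prod g w s"
    using compl_prod_bounds by simp
  then obtain L where "compl_prod g w \<longlonglongrightarrow> L"
    using decseq_convergent[OF decseq_compl_prod] by blast
  then show ?thesis
    by (simp add: limI)
qed

lemma lim_compl_prod_le: "lim (compl_prod g w) \<le> compl_prod g w s"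
  by (rule decseq_ge[OF decseq_compl_prod compl_prod_LIMSEQ])

lemma lim_compl_prod_eq_0:
  assumes "\<not> summable (\<lambda>j. g (Suc j))" "finite w"
  shows "lim (compl_prod g w) = 0"
proof (rule ccontr)
  \<comment> \<open>A positive limit \<open>L\<close> would bound the partial sums of \<open>g\<close> by \<open>card w - ln L\<close>.\<close>
  let ?L = "lim (compl_prod g w)"
  assume "?L \<noteq> 0"
  moreover have "0 \<le> ?L"
    using LIMSEQ_le_const[OF compl_prod_LIMSEQ] compl_prod_bounds by auto
  ultimately have L_pos: "0 < ?L"
    by simp
  have "(\<Sum>j\<in>{1..s}. g j) \<le> card w - ln ?L" for s
  proof -
    have "?L \<le> compl_prod g w s"
      by (rule lim_compl_prod_le)
    also have "\<dots> \<le> exp (- (\<Sum>j\<in>{1..s} - w. g j))"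
      unfolding compl_prod_def by (rule prod_one_minus_le_exp) (use g01 in auto)
    finally have "ln ?L \<le> - (\<Sum>j\<in>{1..s} - w. g j)"
      using L_pos by (metis exp_gt_zero ln_exp ln_le_cancel_iff)
    moreover have "(\<Sum>j\<in>{1..s} \<inter> w. g j) \<le> card ({1..s} \<inter> w)"
      using sum_bounded_above[of "{1..s} \<inter> w" g 1] g01 by simp
    moreover have "real (card ({1..s} \<inter> w)) \<le> card w"
      using assms(2) by (simp add: card_mono)
    moreover have "(\<Sum>j\<in>{1..s}. g j) = (\<Sum>j\<in>{1..s} \<inter> w. g j) + (\<Sum>j\<in>{1..s} - w. g j)"
      by (rule sum.Int_Diff) simp
    ultimately show ?thesis
      by linarith
  qed
  then have "summable (\<lambda>j. g (Suc j))"
    by (rule summable_if_partial_sums_bounded)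
  with assms(1) show False ..
qed

lemma compl_prod_atLeastAtMost_ge:
  assumes "summable (\<lambda>j. g (Suc j))"
  shows "1 - ((\<Sum>j. g (Suc j)) - (\<Sum>j\<in>{1..r}. g j)) \<le> compl_prod g {1..r} s"
proof -
  have "{1..s} - {1..r} = {1..max r s} - {1..r}"
    by auto
  then have "(\<Sum>j\<in>{1..s} - {1..r}. g j) = (\<Sum>j\<in>{1..max r s}. g j) - (\<Sum>j\<in>{1..r}. g j)"
    by (simp add: sum_diff)
  also have "(\<Sum>j\<in>{1..max r s}. g j) \<le> (\<Sum>j. g (Suc j))"
    unfolding sum_bounds_lt_plus1[symmetric] using g01 by (intro sum_le_suminf assms) auto
  finally have "(\<Sum>j\<in>{1..s} - {1..r}. g j) \<le> (\<Sum>j. g (Suc j)) - (\<Sum>j\<in>{1..r}. g j)"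
    by simp
  moreover have "1 - (\<Sum>j\<in>{1..s} - {1..r}. g j) \<le> compl_prod g {1..r} s"
    unfolding compl_prod_def by (rule Weierstrass_prod_ineq) (use g01 in auto)
  ultimately show ?thesis
    by linarith
qed

lemma lim_compl_prod_atLeastAtMost_LIMSEQ:
  assumes "summable (\<lambda>j. g (Suc j))"
  shows "(\<lambda>r. lim (compl_prod g {1..r})) \<longlonglongrightarrow> 1"
proof (rule tendsto_sandwich)
  have "(\<lambda>r. \<Sum>j\<in>{1..r}. g j) \<longlonglongrightarrow> (\<Sum>j. g (Suc j))"
    unfolding sum_bounds_lt_plus1[symmetric] using assms by (rule summable_LIMSEQ)
  then have "(\<lambda>r. 1 - ((\<Sum>j. g (Suc j)) - (\<Sum>j\<in>{1..r}. g j)))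
      \<longlonglongrightarrow> 1 - ((\<Sum>j. g (Suc j)) - (\<Sum>j. g (Suc j)))"
    by (intro tendsto_diff tendsto_const)
  then show "(\<lambda>r. 1 - ((\<Sum>j. g (Suc j)) - (\<Sum>j\<in>{1..r}. g j))) \<longlonglongrightarrow> 1"
    by simp
  show "\<forall>\<^sub>F r in sequentially. 1 - ((\<Sum>j. g (Suc j)) - (\<Sum>j\<in>{1..r}. g j)) \<le> lim (compl_prod g {1..r})"
  proof (intro always_eventually allI)
    fix r
    show "1 - ((\<Sum>j. g (Suc j)) - (\<Sum>j\<in>{1..r}. g j)) \<le> lim (compl_prod g {1..r})"
      by (rule LIMSEQ_le_const[OF compl_prod_LIMSEQ]) (use compl_prod_atLeastAtMost_ge[OF assms] in blast)
  qed
  show "\<forall>\<^sub>F r in sequentially. lim (compl_prod g {1..r}) \<le> 1"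
  proof (intro always_eventually allI)
    fix r
    show "lim (compl_prod g {1..r}) \<le> 1"
      using lim_compl_prod_le[of "{1..r}" 0] compl_prod_bounds[of "{1..r}" 0] by simp
  qed
qed simp

lemma lim_compl_prod_pos:
  assumes "summable (\<lambda>j. g (Suc j))" "finite w" "\<forall>j\<ge>1. g j = 1 \<longrightarrow> j \<in> w"
  shows "0 < lim (compl_prod g w)"
proof -
  obtain k where k: "w \<subseteq> {..<k}"
    using finite_nat_bounded[OF assms(2)] by blast
  have "\<forall>\<^sub>F r in sequentially. 0 < lim (compl_prod g {1..r})"
    using lim_compl_prod_atLeastAtMost_LIMSEQ[OF assms(1)] zero_less_one by (rule order_tendstoD)
  then obtain N where N: "\<forall>r\<ge>N. 0 < lim (compl_prod g {1..r})"
    unfolding eventually_sequentially by blast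
  define r where "r = max N k"
  have r: "0 < lim (compl_prod g {1..r})" "k \<le> r"
    using N by (simp_all add: r_def)
  \<comment> \<open>The factors below \<open>r\<close> are positive as \<open>w\<close> contains every \<open>j\<close> with \<open>g j = 1\<close>.\<close>
  define c where "c = (\<Prod>j\<in>{1..r} - w. 1 - g j)"
  have c_pos: "0 < c"
    unfolding c_def
  proof (rule prod_pos)
    fix j assume "j \<in> {1..r} - w"
    then have "g j \<noteq> 1" "g j \<le> 1"
      using g01[of j] assms(3) by auto
    then show "0 < 1 - g j"
      by simp
  qed
  have "c * lim (compl_prod g {1..r}) \<le> compl_prod g w s" if "r \<le> s" for s
  proof -
    have "{1..s} - w = ({1..r} - w) \<union> ({1..s} - {1..r})"
      using k r(2) that by auto
    then have "compl_prod g w s = c * compl_prod g {1..r} s"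
      unfolding compl_prod_def c_def by (simp only:) (rule prod.union_disjoint; auto)
    then show ?thesis
      using c_pos lim_compl_prod_le by simp
  qed
  then have "c * lim (compl_prod g {1..r}) \<le> lim (compl_prod g w)"
    by (intro LIMSEQ_le_const[OF compl_prod_LIMSEQ]) auto
  with c_pos r(1) show ?thesis
    by (smt (verit) mult_pos_pos)
qed

lemma Tdown_prodw_eq_0_iff:
  assumes "0 < C"
  shows "(\<forall>u\<in>U \<infinity>. Tdown C (prodw g) u = 0) \<longleftrightarrow> \<not> summable (\<lambda>j. g (Suc j))"
proof
  assume "\<not> summable (\<lambda>j. g (Suc j))"
  then show "\<forall>u\<in>U \<infinity>. Tdown C (prodw g) u = 0"
    using Tdown_prodw[OF _ compl_prod_LIMSEQ] lim_compl_prod_eq_0 by (simp add: mem_U_infinity)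
next
  assume all_0: "\<forall>u\<in>U \<infinity>. Tdown C (prodw g) u = 0"
  show "\<not> summable (\<lambda>j. g (Suc j))"
  proof
    assume summable: "summable (\<lambda>j. g (Suc j))"
    define u where "u = {j. 1 \<le> j \<and> g j = 1}"
    obtain N where N: "\<forall>j\<ge>N. g (Suc j) < 1"
      using order_tendstoD(2)[OF summable_LIMSEQ_zero[OF summable], of 1]
      unfolding eventually_sequentially by auto
    have "u \<subseteq> {1..N}"
    proof
      fix j assume "j \<in> u"
      then have "1 \<le> j" "g (Suc (j - 1)) = 1"
        by (simp_all add: u_def)
      then have "\<not> N \<le> j - 1"
        using N by force
      with \<open>1 \<le> j\<close> show "j \<in> {1..N}"
        by simp
    qed
    then have "finite u"
      by (rule finite_subset) simp
    then have "u \<in> U \<infinity>" "prodw g u = 1" "0 < lim (compl_prod g u)"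
      using summable by (auto simp: mem_U_infinity prodw_def u_def intro!: lim_compl_prod_pos)
    then have "Tdown C (prodw g) u \<noteq> 0"
      using Tdown_prodw[OF \<open>finite u\<close> compl_prod_LIMSEQ] \<open>0 < C\<close> by simp
    with all_0 \<open>u \<in> U \<infinity>\<close> show False
      by blast
  qed
qed

lemma Delta_prodw_tail_LIMSEQ:
  assumes "finite u" "u \<subseteq> {..r}"
  shows "(\<lambda>s. Delta ({1..s} - {1..r}) (prodw g) u) \<longlonglongrightarrow> prodw g u * lim (compl_prod g {1..r})"
proof -
  have "(\<lambda>s. Delta ({1..s} - {1..r}) (prodw g) u) = (\<lambda>s. prodw g u * compl_prod g {1..r} s)"
    using assms by (intro ext Delta_prodw_compl) auto
  then show ?thesis
    by (simp add: tendsto_mult_left compl_prod_LIMSEQ)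
qed

lemma convergent_Delta_prodw_tail:
  assumes "finite u"
  shows "convergent (\<lambda>s. Delta ({1..s} - {1..r}) (prodw g) u)"
proof (cases "u \<subseteq> {..r}")
  case True
  then show ?thesis
    using Delta_prodw_tail_LIMSEQ[OF assms] by (auto simp: convergent_def)
next
  case False
  then obtain m where "m \<in> u" "r < m"
    by (meson atMost_iff not_le subsetI)
  then have "\<forall>s\<ge>m. Delta ({1..s} - {1..r}) (prodw g) u = 0"
    by (intro allI impI Delta_eq_0_if_overlap) auto
  then have "(\<lambda>s. Delta ({1..s} - {1..r}) (prodw g) u) \<longlonglongrightarrow> 0"
    by (intro tendsto_eventually) (auto simp: eventually_sequentially)
  then show ?thesis
    by (auto simp: convergent_def)
qed

lemma prodw_in_A_iff: "prodw g \<in> A \<infinity> \<longleftrightarrow> summable (\<lambda>j. g (Suc j))"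
proof
  assume "prodw g \<in> A \<infinity>"
  then have "(\<lambda>r. lim (\<lambda>s. Delta ({1..s} - {1..r}) (prodw g) {})) \<longlonglongrightarrow> prodw g {}"
    by (simp add: A_def mem_U_infinity)
  moreover have "lim (\<lambda>s. Delta ({1..s} - {1..r}) (prodw g) {}) = lim (compl_prod g {1..r})" for r
    using limI[OF Delta_prodw_tail_LIMSEQ[of "{}" r]] by (simp add: prodw_def)
  ultimately have "(\<lambda>r. lim (compl_prod g {1..r})) \<longlonglongrightarrow> 1"
    by (simp add: prodw_def)
  then show "summable (\<lambda>j. g (Suc j))"
    using lim_compl_prod_eq_0 LIMSEQ_unique[OF _ tendsto_const[of "0::real"]] by force
next
  assume summable: "summable (\<lambda>j. g (Suc j))"
  have "(\<lambda>r. lim (\<lambda>s. Delta ({1..s} - {1..r}) (prodw g) u)) \<longlonglongrightarrow> prodw g u" if "finite u" for u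
  proof -
    obtain k where k: "u \<subseteq> {..<k}"
      using finite_nat_bounded[OF \<open>finite u\<close>] by blast
    have "\<forall>\<^sub>F r in sequentially.
        prodw g u * lim (compl_prod g {1..r}) = lim (\<lambda>s. Delta ({1..s} - {1..r}) (prodw g) u)"
      using eventually_ge_at_top[of k]
    proof eventually_elim
      case (elim r)
      with k show ?case
        by (intro limI[symmetric] Delta_prodw_tail_LIMSEQ \<open>finite u\<close>) auto
    qed
    moreover have "(\<lambda>r. prodw g u * lim (compl_prod g {1..r})) \<longlonglongrightarrow> prodw g u * 1"
      by (intro tendsto_mult_left lim_compl_prod_atLeastAtMost_LIMSEQ summable)
    ultimately show ?thesis
      using Lim_transform_eventually by fastforce
  qed
  with prodw_in_M_infinity convergent_Delta_prodw_tail show "prodw g \<in> A \<infinity>"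
    by (simp add: A_def mem_U_infinity)
qed

lemma sum_prodw_le_exp_suminf:
  assumes summable: "summable (\<lambda>j. g (Suc j))" and F: "F \<subseteq> U \<infinity>" "finite F"
  shows "sum (prodw g) F \<le> exp (\<Sum>j. g (Suc j))"
proof -
  define n where "n = Max (insert 0 (\<Union>F))"
  have "finite (\<Union>F)"
    using F by (intro finite_Union) (auto simp: mem_U_infinity)
  have "F \<subseteq> Pow {1..n}"
  proof
    fix u assume "u \<in> F"
    then have "\<forall>j\<in>u. 1 \<le> j"
      using F(1) by (auto simp: mem_U_infinity)
    moreover have "\<forall>j\<in>u. j \<le> n"
      using \<open>u \<in> F\<close> \<open>finite (\<Union>F)\<close> unfolding n_def by (intro ballI Max_ge) auto
    ultimately show "u \<in> Pow {1..n}"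
      by auto
  qed
  then have "sum (prodw g) F \<le> (\<Sum>u\<in>Pow {1..n}. prodw g u)"
    by (intro sum_mono2 prodw_nonneg) auto
  also have "\<dots> = (\<Prod>j\<in>{1..n}. 1 + g j)"
    by (simp add: sum_prodw_Pow)
  also have "\<dots> \<le> exp (\<Sum>j\<in>{1..n}. g j)"
    using g01 by (intro prod_le_exp_sum) auto
  also have "(\<Sum>j\<in>{1..n}. g j) \<le> (\<Sum>j. g (Suc j))"
    unfolding sum_bounds_lt_plus1[symmetric] using g01 by (intro sum_le_suminf summable) auto
  finally show ?thesis
    by simp
qed

lemma prodw_summable_on_U_infinity_iff:
  "prodw g summable_on U \<infinity> \<longleftrightarrow> summable (\<lambda>j. g (Suc j))"
proof
  assume summable_on: "prodw g summable_on U \<infinity>"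
  have "(\<Sum>j\<in>{1..s}. g j) \<le> infsum (prodw g) (U \<infinity>)" for s
  proof -
    have "(\<Sum>j\<in>{1..s}. g j) \<le> (\<Prod>j\<in>{1..s}. 1 + g j)"
      using g01 by (intro sum_le_prod) auto
    also have "\<dots> = (\<Sum>u\<in>Pow {1..s}. prodw g u)"
      by (simp add: sum_prodw_Pow)
    also have "\<dots> \<le> infsum (prodw g) (U \<infinity>)"
      by (rule finite_sum_le_infsum[OF summable_on _ Pow_atLeastAtMost_subset_U_infinity])
        (auto simp: mem_U_infinity intro: prodw_nonneg)
    finally show ?thesis .
  qed
  then show "summable (\<lambda>j. g (Suc j))"
    by (rule summable_if_partial_sums_bounded)
next
  assume "summable (\<lambda>j. g (Suc j))"
  then have "sum (prodw g) F \<le> exp (\<Sum>j. g (Suc j))" if "F \<subseteq> U \<infinity>" "finite F" for F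
    using that by (rule sum_prodw_le_exp_suminf)
  then show "prodw g summable_on U \<infinity>"
    by (intro nonneg_bdd_above_summable_on bdd_aboveI)
      (auto simp: mem_U_infinity intro: prodw_nonneg)
qed

end

theorem mainTheorem6:
  fixes d :: enat and g :: "nat \<Rightarrow> real"
  assumes nonneg: "\<forall>j\<in>idx d. 0 \<le> g j"
    and noninc: "\<forall>i\<in>idx d. \<forall>j\<in>idx d. i \<le> j \<longrightarrow> g j \<le> g i"
  shows "(\<forall>u\<in>U d. \<forall>v\<in>U d. u \<inter> v = {} \<longrightarrow>
            Delta v (prodw g) u = prodw g u * (\<Prod>j\<in>v. 1 - g j))
    \<and> (prodw g \<in> M d \<longleftrightarrow> (\<forall>j\<in>idx d. 0 \<le> g j \<and> g j \<le> 1))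
    \<and> (d = \<infinity> \<and> prodw g \<in> M d \<longrightarrow>
         (prodw g \<in> N d \<longleftrightarrow> g \<longlonglongrightarrow> 0)
       \<and> (\<forall>C>0. (\<forall>u\<in>U d. Tdown C (prodw g) u = 0) \<longleftrightarrow> \<not> summable (\<lambda>j. g (Suc j)))
       \<and> (prodw g \<in> A d \<longleftrightarrow> summable (\<lambda>j. g (Suc j)))
       \<and> (summable (\<lambda>j. g (Suc j)) \<longleftrightarrow> prodw g \<in> P d))"
proof (intro conjI impI)
  show "\<forall>u\<in>U d. \<forall>v\<in>U d. u \<inter> v = {} \<longrightarrow> Delta v (prodw g) u = prodw g u * (\<Prod>j\<in>v. 1 - g j)"
    by (auto simp: U_def Delta_prodw)
  show M_iff: "prodw g \<in> M d \<longleftrightarrow> (\<forall>j\<in>idx d. 0 \<le> g j \<and> g j \<le> 1)"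
    using nonneg by (rule prodw_in_M_iff)
  assume "d = \<infinity> \<and> prodw g \<in> M d"
  then have d: "d = \<infinity>" and g01: "\<And>j. 1 \<le> j \<Longrightarrow> g j \<in> {0..1}"
    using M_iff by (auto simp: idx_def)
  show "prodw g \<in> N d \<longleftrightarrow> g \<longlonglongrightarrow> 0"
    using prodw_in_N_iff[OF g01] d by simp
  show "\<forall>C>0. (\<forall>u\<in>U d. Tdown C (prodw g) u = 0) \<longleftrightarrow> \<not> summable (\<lambda>j. g (Suc j))"
    using Tdown_prodw_eq_0_iff[OF g01] d by simp
  show "prodw g \<in> A d \<longleftrightarrow> summable (\<lambda>j. g (Suc j))"
    using prodw_in_A_iff[OF g01] d by simp
  show "summable (\<lambda>j. g (Suc j)) \<longleftrightarrow> prodw g \<in> P d"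
    using prodw_summable_on_U_infinity_iff[OF g01] prodw_in_M_infinity[OF g01] d
    by (simp add: P_def)
qed

end
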